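(* Let $M$ be a sharp toric monoid and let $N\subseteq M$ be a face. Then the following conditions are equivalent: (a) $N$ splits off, i.e. there is a face $K\subseteq M$ such that the natural map $N\oplus K\to M$ is an isomorphism; (b) the ideal $(N^+)=N^++M$ of $M$ is prime and $\operatorname{ht}((N^+))\ge \operatorname{rk}(N)$; (c) the ideal $(N^+)$ is prime and the face $K=M\setminus (N^+)$ satisfies $\operatorname{rk}(K)+\operatorname{rk}(N)\le \operatorname{rk}(M)$.
   Context: Monoids are commutative. For a monoid $M$: $M^\times$ is its group of units, $M^{gp}$ its Grothendieck group, $\operatorname{rk}(M)=\dim_{\mathbb Q}(M^{gp}\otimes\mathbb Q)$. $M$ is sharp if $M^\times=\{0\}$. A toric monoid is a fine (finitely generated, integral) saturated monoid whose Grothendieck group is torsion free. For a face $N$, $N^+=N\setminus N^\times$. An ideal of $M$ is a subset $I$ with $I+M\subseteq I$; it is prime if $M\setminus I$ is a submonoid (then $M\setminus I$ is a face). For a toric monoid and a prime ideal $\mathfrak p$ with face $F=M\setminus\mathfrak p$, the height is $\operatorname{ht}(\mathfrak p)=\operatorname{rk}(M)-\operatorname{rk}(F)$. *)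

theory Defs
  imports Main
begin

text \<open>A (commutative, integral) monoid is represented as a submonoid M of an
abelian group 'a; its Grothendieck group is then the subgroup generated by M.\<close>

definition nmul :: "nat \<Rightarrow> 'a::ab_group_add \<Rightarrow> 'a" where
  "nmul n x = (((+) x) ^^ n) 0"

definition zmul :: "int \<Rightarrow> 'a::ab_group_add \<Rightarrow> 'a" where
  "zmul k x = (if k \<ge> 0 then nmul (nat k) x else - nmul (nat (- k)) x)"

definition submonoid :: "'a::ab_group_add set \<Rightarrow> bool" where
  "submonoid M \<longleftrightarrow> 0 \<in> M \<and> (\<forall>x\<in>M. \<forall>y\<in>M. x + y \<in> M)"

definition units :: "'a::ab_group_add set \<Rightarrow> 'a set" where
  "units M = {x \<in> M. \<exists>y\<in>M. x + y = 0}"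

definition sharp :: "'a::ab_group_add set \<Rightarrow> bool" where
  "sharp M \<longleftrightarrow> units M = {0}"

definition gp :: "'a::ab_group_add set \<Rightarrow> 'a set" where
  "gp M = {a - b | a b. a \<in> M \<and> b \<in> M}"

definition fin_gen :: "'a::ab_group_add set \<Rightarrow> bool" where
  "fin_gen M \<longleftrightarrow> (\<exists>G. finite G \<and> G \<subseteq> M \<and>
      M = {\<Sum>g\<in>G. nmul (c g) g | c. True})"

definition saturated :: "'a::ab_group_add set \<Rightarrow> bool" where
  "saturated M \<longleftrightarrow> (\<forall>x\<in>gp M. \<forall>n>0. nmul n x \<in> M \<longrightarrow> x \<in> M)"

definition torsion_free :: "'a::ab_group_add set \<Rightarrow> bool" where
  "torsion_free G \<longleftrightarrow> (\<forall>x\<in>G. \<forall>n>0. nmul n x = 0 \<longrightarrow> x = 0)"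

text \<open>fine (f.g. + integral; integrality is automatic for submonoids of groups),
saturated, torsion-free Grothendieck group\<close>
definition toric :: "'a::ab_group_add set \<Rightarrow> bool" where
  "toric M \<longleftrightarrow> submonoid M \<and> fin_gen M \<and> saturated M \<and> torsion_free (gp M)"

text \<open>Z-linear independence; rank = dim_Q (M^gp \<otimes> Q) = maximal size of a
Z-linearly independent subset of M^gp\<close>
definition zindep :: "'a::ab_group_add set \<Rightarrow> bool" where
  "zindep S \<longleftrightarrow> finite S \<and>
     (\<forall>c::'a \<Rightarrow> int. (\<Sum>s\<in>S. zmul (c s) s) = 0 \<longrightarrow> (\<forall>s\<in>S. c s = 0))"

definition rk :: "'a::ab_group_add set \<Rightarrow> nat" where
  "rk M = Max {card S | S. S \<subseteq> gp M \<and> zindep S}"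

definition face :: "'a::ab_group_add set \<Rightarrow> 'a set \<Rightarrow> bool" where
  "face F M \<longleftrightarrow> submonoid F \<and> F \<subseteq> M \<and>
     (\<forall>x\<in>M. \<forall>y\<in>M. x + y \<in> F \<longrightarrow> x \<in> F \<and> y \<in> F)"

definition ideal :: "'a::ab_group_add set \<Rightarrow> 'a set \<Rightarrow> bool" where
  "ideal I M \<longleftrightarrow> I \<subseteq> M \<and> (\<forall>x\<in>I. \<forall>m\<in>M. x + m \<in> I)"

definition prime_ideal :: "'a::ab_group_add set \<Rightarrow> 'a set \<Rightarrow> bool" where
  "prime_ideal I M \<longleftrightarrow> ideal I M \<and> submonoid (M - I)"

definition plus_part :: "'a::ab_group_add set \<Rightarrow> 'a set" where
  "plus_part N = N - units N"

definition gen_ideal :: "'a::ab_group_add set \<Rightarrow> 'a set \<Rightarrow> 'a set" where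
  "gen_ideal S M = {s + m | s m. s \<in> S \<and> m \<in> M}"

definition height :: "'a::ab_group_add set \<Rightarrow> 'a set \<Rightarrow> int" where
  "height p M = int (rk M) - int (rk (M - p))"

definition splits_off :: "'a::ab_group_add set \<Rightarrow> 'a set \<Rightarrow> bool" where
  "splits_off N M \<longleftrightarrow> (\<exists>K. face K M \<and> bij_betw (\<lambda>(n, k). n + k) (N \<times> K) M)"

end

theory Submission
  imports Defs "HOL.Modules"
begin

text \<open>
  From this,
  rk N + rk K \<le> rk M if gp N and gp K meet trivially (rk_add_le), and
  rk M < rk N + rk K if gp N + gp K covers gp M while gp N and gp K share a
  nonzero element, by torsion-freeness (rk_lt_of_common).
  Section 4 shows that a minimal generating set of a sharp monoid consists of
  atoms (min_gens_atom).  Section 5 connects splittings with (N^+): addition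
  N \<times> K \<rightarrow> M is injective iff gp N \<inter> gp K = 0 (add_inj_iff); a splitting has
  M - (N^+) = K (split_complement), giving (a) \<Rightarrow> (c) (splits_off_imp);
  conversely K = M - (N^+) is a face containing every atom outside N, so
  N + K = M, and the rank condition forces injectivity (imp_splits_off).
\<close>

section \<open>Integer multiples\<close>

lemma nmul_0 [simp]: "nmul 0 x = 0"
  by (simp add: nmul_def)

lemma nmul_Suc [simp]: "nmul (Suc n) x = x + nmul n x"
  by (simp add: nmul_def)

lemma nmul_zero [simp]: "nmul n 0 = 0"
  by (induct n) auto

lemma nmul_add: "nmul (m + n) x = nmul m x + nmul n x"
  by (induct m) (auto simp: add.assoc)

lemma nmul_distrib: "nmul n (x + y) = nmul n x + nmul n y"
  by (induct n) (auto simp: algebra_simps)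

lemma nmul_diff: "nmul n (x - y) = nmul n x - nmul n y"
proof -
  have "nmul n (- y) = - nmul n y"
    by (induct n) (auto simp: algebra_simps)
  then show ?thesis
    using nmul_distrib[of n x "- y"] by simp
qed

lemma nmul_mult: "nmul (m * n) x = nmul m (nmul n x)"
  by (induct m) (auto simp: nmul_add nmul_distrib)

lemma zmul_nat_diff: "zmul (int a - int b) x = nmul a x - nmul b x"
proof (cases "b \<le> a")
  case True
  then have e: "int a - int b = int (a - b)"
    by simp
  have "nmul a x = nmul (a - b) x + nmul b x"
    using nmul_add[of "a - b" b x] True by simp
  then show ?thesis
    unfolding e zmul_def by simp
next
  case False
  then have e: "int a - int b = - int (b - a)"
    by simp
  have "nmul b x = nmul (b - a) x + nmul a x"
    using nmul_add[of "b - a" a x] False by simp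
  moreover have "nat (int b - int a) = b - a"
    by simp
  ultimately show ?thesis
    using False unfolding e zmul_def by simp
qed

lemma int_as_diff: "\<exists>a b. (i::int) = int a - int b"
  by (rule exI[of _ "nat i"], rule exI[of _ "nat (- i)"]) simp

lemma zmul_int: "zmul (int n) x = nmul n x"
  using zmul_nat_diff[of n 0 x] by simp

lemma zmul_right_distrib: "zmul i (x + y) = zmul i x + zmul i y"
proof -
  obtain a b where i: "i = int a - int b"
    using int_as_diff by blast
  show ?thesis
    unfolding i zmul_nat_diff nmul_distrib by (simp add: algebra_simps)
qed

lemma zmul_left_distrib: "zmul (i + j) x = zmul i x + zmul j x"
proof -
  obtain a b c d where i: "i = int a - int b" and j: "j = int c - int d"
    using int_as_diff by meson
  have "i + j = int (a + c) - int (b + d)"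
    by (simp add: i j)
  then have "zmul (i + j) x = nmul (a + c) x - nmul (b + d) x"
    by (simp only: zmul_nat_diff)
  then show ?thesis
    by (simp add: i j zmul_nat_diff nmul_add algebra_simps)
qed

lemma zmul_scale: "zmul i (zmul j x) = zmul (i * j) x"
proof -
  obtain a b c d where i: "i = int a - int b" and j: "j = int c - int d"
    using int_as_diff by meson
  have "i * j = int (a * c + b * d) - int (a * d + b * c)"
    by (simp add: i j algebra_simps)
  then have "zmul (i * j) x = nmul (a * c + b * d) x - nmul (a * d + b * c) x"
    by (simp only: zmul_nat_diff)
  then show ?thesis
    by (simp add: i j zmul_nat_diff nmul_add nmul_diff nmul_mult algebra_simps)
qed

lemma zmul_one: "zmul 1 x = x"
  by (simp add: zmul_def nmul_def)

text \<open>Every abelian group is a Z-module under zmul; this gives us spans and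
  linear dependence from the library.\<close>

interpretation Z: module "zmul :: int \<Rightarrow> 'a::ab_group_add \<Rightarrow> 'a"
  by unfold_locales (auto simp: zmul_right_distrib zmul_left_distrib zmul_scale zmul_one)

lemma nmul_sum: "nmul k (sum f A) = (\<Sum>x\<in>A. nmul k (f x))"
  using Z.scale_sum_right[of "int k" f A] by (simp add: zmul_int)

lemma zindep_iff: "zindep S \<longleftrightarrow> finite S \<and> \<not> Z.dependent S"
  unfolding zindep_def using Z.dependent_finite[of S] by blast

lemma zindep_nonzero: "zindep A \<Longrightarrow> 0 \<notin> A"
  using zindep_iff Z.dependent_zero by blast

section \<open>Rational closure of a span and the dimension bound\<close>

text \<open>The elements having a nonzero multiple in the Z-span of T; this is the
  span of T after tensoring with Q, expressed inside the group.\<close>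

definition rspan :: "'a::ab_group_add set \<Rightarrow> 'a set" where
  "rspan T = {y. \<exists>d. d \<noteq> 0 \<and> zmul d y \<in> Z.span T}"

lemma rspan_span: "Z.span T \<subseteq> rspan T"
  unfolding rspan_def by (auto intro!: exI[of _ 1])

lemma rspan_base: "T \<subseteq> rspan T"
  using rspan_span Z.span_superset by blast

lemma subspace_rspan: "Z.subspace (rspan T)"
  unfolding Z.subspace_def
proof (intro conjI ballI allI)
  show "0 \<in> rspan T"
    using rspan_span Z.span_zero by blast
next
  fix x y assume "x \<in> rspan T" "y \<in> rspan T"
  then obtain d1 d2 where d: "d1 \<noteq> 0" "zmul d1 x \<in> Z.span T" "d2 \<noteq> 0" "zmul d2 y \<in> Z.span T"
    unfolding rspan_def by blast
  have "zmul (d1 * d2) (x + y) = zmul d2 (zmul d1 x) + zmul d1 (zmul d2 y)"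
    by (simp add: Z.scale_right_distrib mult.commute)
  also have "\<dots> \<in> Z.span T"
    using d by (metis Z.span_add Z.span_scale)
  finally show "x + y \<in> rspan T"
    using d unfolding rspan_def by (auto intro!: exI[of _ "d1 * d2"])
next
  fix c x assume "x \<in> rspan T"
  then obtain d where d: "d \<noteq> 0" "zmul d x \<in> Z.span T"
    unfolding rspan_def by blast
  have "zmul d (zmul c x) = zmul c (zmul d x)"
    by (simp add: mult.commute)
  also have "\<dots> \<in> Z.span T"
    using d by (metis Z.span_scale)
  finally show "zmul c x \<in> rspan T"
    using d unfolding rspan_def by auto
qed

lemma rspan_trans:
  assumes "U \<subseteq> rspan T"
  shows "rspan U \<subseteq> rspan T"
proof
  fix y assume "y \<in> rspan U"
  then obtain d where d: "d \<noteq> 0" "zmul d y \<in> Z.span U"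
    unfolding rspan_def by blast
  have "Z.span U \<subseteq> rspan T"
    using assms subspace_rspan by (rule Z.span_minimal)
  then obtain d' where "d' \<noteq> 0" "zmul d' (zmul d y) \<in> Z.span T"
    using d unfolding rspan_def by blast
  then show "y \<in> rspan T"
    using d unfolding rspan_def by (auto intro!: exI[of _ "d' * d"])
qed

lemma rspan_mono: "U \<subseteq> T \<Longrightarrow> rspan U \<subseteq> rspan T"
  by (meson order_trans rspan_base rspan_trans)

lemma dependence_lift:
  assumes I: "finite I" "i0 \<in> I" and a: "a i0 \<noteq> 0"
    and dep: "(\<Sum>i\<in>I - {i0}. zmul (c' i) (zmul (a i0) (f i) - zmul (a i) (f i0))) = 0"
    and nz: "\<exists>i\<in>I - {i0}. c' i \<noteq> 0"
  shows "\<exists>c. (\<Sum>i\<in>I. zmul (c i) (f i)) = 0 \<and> (\<exists>i\<in>I. c i \<noteq> 0)"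
proof -
  define c where "c i = (if i = i0 then - (\<Sum>j\<in>I - {i0}. c' j * a j) else c' i * a i0)" for i
  have "(\<Sum>i\<in>I. zmul (c i) (f i)) = zmul (c i0) (f i0) + (\<Sum>i\<in>I - {i0}. zmul (c i) (f i))"
    using I by (simp add: sum.remove)
  also have "(\<Sum>i\<in>I - {i0}. zmul (c i) (f i)) = (\<Sum>i\<in>I - {i0}. zmul (c' i * a i0) (f i))"
    by (rule sum.cong) (auto simp: c_def)
  also have "zmul (c i0) (f i0) = - (\<Sum>j\<in>I - {i0}. zmul (c' j * a j) (f i0))"
    by (simp add: c_def Z.scale_sum_left)
  also have "- (\<Sum>j\<in>I - {i0}. zmul (c' j * a j) (f i0)) + (\<Sum>i\<in>I - {i0}. zmul (c' i * a i0) (f i))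
      = (\<Sum>i\<in>I - {i0}. zmul (c' i) (zmul (a i0) (f i) - zmul (a i) (f i0)))"
    by (simp add: Z.scale_right_diff_distrib sum_subtractf)
  finally have "(\<Sum>i\<in>I. zmul (c i) (f i)) = 0"
    using dep by simp
  moreover have "\<exists>i\<in>I. c i \<noteq> 0"
    using nz a by (auto simp: c_def)
  ultimately show ?thesis
    by blast
qed

text \<open>Steinitz-type bound: more than card T vectors in the Z-span of T are
  linearly dependent.  Induction on T eliminates one vector of T at a time.\<close>

lemma span_family_dependent:
  assumes "finite T"
  shows "finite I \<Longrightarrow> card T < card I \<Longrightarrow> (\<forall>i\<in>I. f i \<in> Z.span T) \<Longrightarrow>
    \<exists>c. (\<Sum>i\<in>I. zmul (c i) (f i)) = 0 \<and> (\<exists>i\<in>I. c i \<noteq> 0)"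
  using assms
proof (induction T arbitrary: I f rule: finite_induct)
  case empty
  then obtain i where "i \<in> I"
    by fastforce
  moreover have "\<forall>i\<in>I. f i = 0"
    using empty by auto
  ultimately show ?case
    by (intro exI[of _ "\<lambda>_. 1"]) auto
next
  case (insert t T I f)
  have "\<forall>i\<in>I. \<exists>k. f i - zmul k t \<in> Z.span T"
    using insert.prems(3) Z.span_breakdown_eq by blast
  then obtain a where a: "\<And>i. i \<in> I \<Longrightarrow> f i - zmul (a i) t \<in> Z.span T"
    by metis
  show ?case
  proof (cases "\<forall>i\<in>I. a i = 0")
    case True
    then have "\<forall>i\<in>I. f i \<in> Z.span T"
      using a by force
    moreover have "card T < card I"
      using insert by simp
    ultimately show ?thesis
      using insert.IH insert.prems(1) by blast
  next
    case False
    then obtain i0 where i0: "i0 \<in> I" "a i0 \<noteq> 0"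
      by blast
    define g where "g i = zmul (a i0) (f i) - zmul (a i) (f i0)" for i
    have "g i \<in> Z.span T" if "i \<in> I - {i0}" for i
    proof -
      have "g i = zmul (a i0) (f i - zmul (a i) t) - zmul (a i) (f i0 - zmul (a i0) t)"
        unfolding g_def by (simp add: Z.scale_right_diff_distrib mult.commute)
      then show ?thesis
        using a that i0 by (metis DiffD1 Z.span_diff Z.span_scale)
    qed
    moreover have "card T < card (I - {i0})"
      using insert i0 by simp
    ultimately obtain c' where "(\<Sum>i\<in>I - {i0}. zmul (c' i) (g i)) = 0" "\<exists>i\<in>I - {i0}. c' i \<noteq> 0"
      using insert.IH[of "I - {i0}" g] insert.prems(1) by blast
    then show ?thesis
      using dependence_lift[of I i0 a c' f] insert.prems(1) i0 unfolding g_def by blast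
  qed
qed

lemma zindep_card_le:
  assumes "zindep S" "finite T" "S \<subseteq> rspan T"
  shows "card S \<le> card T"
proof (rule ccontr)
  assume "\<not> ?thesis"
  then have lt: "card T < card S"
    by simp
  obtain d where d: "\<And>s. s \<in> S \<Longrightarrow> d s \<noteq> 0 \<and> zmul (d s) s \<in> Z.span T"
    using assms(3) unfolding rspan_def subset_iff mem_Collect_eq by metis
  have fS: "finite S"
    using assms(1) zindep_def by blast
  obtain c where c: "(\<Sum>s\<in>S. zmul (c s) (zmul (d s) s)) = 0" "\<exists>s\<in>S. c s \<noteq> 0"
    using span_family_dependent[OF assms(2) fS lt, of "\<lambda>s. zmul (d s) s"] d by blast
  have "(\<Sum>s\<in>S. zmul (c s * d s) s) = 0"
    using c by simp
  then have "\<forall>s\<in>S. c s * d s = 0"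
    using assms(1) unfolding zindep_def by (elim conjE allE[of _ "\<lambda>s. c s * d s"]) auto
  then show False
    using c d by auto
qed

section \<open>Grothendieck group and rank\<close>

lemma submonoid_nmul: "submonoid X \<Longrightarrow> x \<in> X \<Longrightarrow> nmul n x \<in> X"
  by (induct n) (auto simp: submonoid_def)

lemma submonoid_sum:
  assumes "submonoid X" "\<And>i. i \<in> A \<Longrightarrow> f i \<in> X"
  shows "sum f A \<in> X"
proof (cases "finite A")
  case True
  then show ?thesis
    using assms(2) by (induct A rule: finite_induct) (use assms(1) in \<open>auto simp: submonoid_def\<close>)
next
  case False
  then show ?thesis
    using assms(1) by (simp add: submonoid_def)
qed

lemma gp_mono: "X \<subseteq> Y \<Longrightarrow> gp X \<subseteq> gp Y"
  unfolding gp_def by blast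

lemma gp_subspace:
  assumes "submonoid X"
  shows "Z.subspace (gp X)"
  unfolding Z.subspace_def
proof (intro conjI ballI allI)
  show "0 \<in> gp X"
    using assms unfolding gp_def submonoid_def by force
next
  fix x y assume "x \<in> gp X" "y \<in> gp X"
  then obtain a b c d where "x = a - b" "y = c - d" "a \<in> X" "b \<in> X" "c \<in> X" "d \<in> X"
    unfolding gp_def by blast
  then show "x + y \<in> gp X"
    using assms unfolding gp_def submonoid_def
    by (intro CollectI exI[of _ "a + c"] exI[of _ "b + d"]) (auto simp: algebra_simps)
next
  fix k x assume "x \<in> gp X"
  then obtain a b where ab: "x = a - b" "a \<in> X" "b \<in> X"
    unfolding gp_def by blast
  obtain p q where k: "k = int p - int q"
    using int_as_diff by blast
  have "zmul k x = (nmul p a + nmul q b) - (nmul p b + nmul q a)"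
    unfolding k zmul_nat_diff ab nmul_diff by (simp add: algebra_simps)
  moreover have "nmul p a + nmul q b \<in> X" "nmul p b + nmul q a \<in> X"
    using assms ab submonoid_nmul unfolding submonoid_def by metis+
  ultimately show "zmul k x \<in> gp X"
    unfolding gp_def by blast
qed

text \<open>A monoid has finite rank if its Grothendieck group lies in the rational
  closure of a finite set; only then is the maximum defining rk meaningful.\<close>

definition finite_rank :: "'a::ab_group_add set \<Rightarrow> bool" where
  "finite_rank X \<longleftrightarrow> (\<exists>G. finite G \<and> gp X \<subseteq> rspan G)"

lemma finite_rank_subset: "finite_rank Y \<Longrightarrow> X \<subseteq> Y \<Longrightarrow> finite_rank X"
  unfolding finite_rank_def using gp_mono by blast

lemma fin_gen_finite_rank:
  assumes "fin_gen M"
  shows "finite_rank M"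
proof -
  obtain G where G: "finite G" "M = {\<Sum>g\<in>G. nmul (c g) g | c. True}"
    using assms unfolding fin_gen_def by blast
  have "M \<subseteq> Z.span G"
  proof
    fix m assume "m \<in> M"
    then obtain c where "m = (\<Sum>g\<in>G. zmul (int (c g)) g)"
      using G by (auto simp: zmul_int)
    then show "m \<in> Z.span G"
      by (simp add: Z.span_sum Z.span_scale Z.span_base)
  qed
  then have "gp M \<subseteq> Z.span G"
    unfolding gp_def using Z.span_diff by blast
  then show ?thesis
    unfolding finite_rank_def using G(1) rspan_span by blast
qed

lemma rk_facts:
  assumes "finite_rank X"
  shows rk_ge: "S \<subseteq> gp X \<Longrightarrow> zindep S \<Longrightarrow> card S \<le> rk X"
    and rk_ex: "\<exists>A. A \<subseteq> gp X \<and> zindep A \<and> card A = rk X"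
proof -
  obtain G where G: "finite G" "gp X \<subseteq> rspan G"
    using assms unfolding finite_rank_def by blast
  let ?C = "{card S | S. S \<subseteq> gp X \<and> zindep S}"
  have "?C \<subseteq> {..card G}"
    using zindep_card_le G by fastforce
  then have fin: "finite ?C"
    using finite_subset by blast
  have "zindep ({} :: 'a set)"
    by (simp add: zindep_def)
  then have ne: "?C \<noteq> {}"
    by blast
  show "S \<subseteq> gp X \<Longrightarrow> zindep S \<Longrightarrow> card S \<le> rk X"
    unfolding rk_def using fin by (intro Max_ge) auto
  have "rk X \<in> ?C"
    unfolding rk_def using fin ne by (rule Max_in)
  then show "\<exists>A. A \<subseteq> gp X \<and> zindep A \<and> card A = rk X"
    by auto
qed

lemma max_indep_rspan:
  assumes fr: "finite_rank X" and A: "A \<subseteq> gp X" "zindep A" "card A = rk X"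
  shows "gp X \<subseteq> rspan A"
proof
  fix y assume y: "y \<in> gp X"
  show "y \<in> rspan A"
  proof (cases "y \<in> A")
    case True
    then show ?thesis
      using rspan_base by blast
  next
    case False
    have fA: "finite A"
      using A(2) zindep_def by blast
    have "\<not> zindep (insert y A)"
      using rk_ge[OF fr, of "insert y A"] A y False fA by auto
    then obtain u where u: "\<exists>v\<in>insert y A. u v \<noteq> 0" "(\<Sum>v\<in>insert y A. zmul (u v) v) = 0"
      using Z.dependent_finite[of "insert y A"] fA zindep_iff by auto
    then have eq: "zmul (u y) y + (\<Sum>v\<in>A. zmul (u v) v) = 0"
      using False fA by simp
    have "u y \<noteq> 0"
    proof
      assume "u y = 0"
      then have "\<forall>v\<in>A. u v = 0"
        using eq A(2) unfolding zindep_def by simp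
      then show False
        using u(1) \<open>u y = 0\<close> by auto
    qed
    moreover have "zmul (u y) y = (\<Sum>v\<in>A. zmul (- u v) v)"
      using eq by (simp add: sum_negf eq_neg_iff_add_eq_0)
    moreover have "(\<Sum>v\<in>A. zmul (- u v) v) \<in> Z.span A"
      by (rule Z.span_sum, rule Z.span_scale, rule Z.span_base)
    ultimately show ?thesis
      unfolding rspan_def by auto
  qed
qed

lemma torsion_zmul:
  assumes "torsion_free V" "x \<in> V" "d \<noteq> 0" "zmul d x = 0"
  shows "x = 0"
proof -
  have "nmul (nat \<bar>d\<bar>) x = 0" "nat \<bar>d\<bar> > 0"
    using assms(3,4) by (auto simp: zmul_def split: if_splits)
  then show ?thesis
    using assms(1,2) unfolding torsion_free_def by blast
qed

text \<open>Rank is superadditive on submonoids with independent Grothendieck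
  groups: independent sets of N and K together stay independent.\<close>

lemma rk_add_le:
  assumes fr: "finite_rank M" and sm: "submonoid N" "submonoid K"
    and sub: "N \<subseteq> M" "K \<subseteq> M" and disj: "gp N \<inter> gp K \<subseteq> {0}"
  shows "rk N + rk K \<le> rk M"
proof -
  obtain AN where AN: "AN \<subseteq> gp N" "zindep AN" "card AN = rk N"
    using rk_ex finite_rank_subset[OF fr sub(1)] by blast
  obtain AK where AK: "AK \<subseteq> gp K" "zindep AK" "card AK = rk K"
    using rk_ex finite_rank_subset[OF fr sub(2)] by blast
  have fin: "finite AN" "finite AK"
    using AN AK zindep_def by blast+
  have dj: "AN \<inter> AK = {}"
    using AN(1,2) AK(1) disj zindep_nonzero by blast
  have "zindep (AN \<union> AK)"
    unfolding zindep_def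
  proof (intro conjI allI impI ballI)
    show "finite (AN \<union> AK)"
      using fin by simp
  next
    fix c s assume h: "(\<Sum>s\<in>AN \<union> AK. zmul (c s) s) = 0" "s \<in> AN \<union> AK"
    let ?sN = "\<Sum>s\<in>AN. zmul (c s) s" and ?sK = "\<Sum>s\<in>AK. zmul (c s) s"
    have e: "?sN = - ?sK"
      using h(1) fin dj by (simp add: sum.union_disjoint eq_neg_iff_add_eq_0)
    have "?sN \<in> gp N" "- ?sK \<in> gp K"
      using gp_subspace[OF sm(1)] gp_subspace[OF sm(2)] AN(1) AK(1)
      by (auto intro!: Z.subspace_neg Z.subspace_sum Z.subspace_scale)
    then have "?sN = 0" "?sK = 0"
      using disj e by auto
    then show "c s = 0"
      using h(2) AN(2) AK(2) unfolding zindep_def by blast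
  qed
  moreover have "AN \<union> AK \<subseteq> gp M"
    using AN(1) AK(1) gp_mono[OF sub(1)] gp_mono[OF sub(2)] by blast
  ultimately have "card (AN \<union> AK) \<le> rk M"
    using rk_ge[OF fr] by blast
  then show ?thesis
    using card_Un_disjoint[OF fin dj] AN AK by simp
qed

lemma exchange_common:
  assumes fA: "finite A" and y: "y \<in> Z.span A" "y \<noteq> 0" "y \<in> rspan B"
  shows "\<exists>a0\<in>A. A \<union> B \<subseteq> rspan ((A - {a0}) \<union> B)"
proof -
  obtain \<alpha> where \<alpha>: "y = (\<Sum>a\<in>A. zmul (\<alpha> a) a)"
    using y(1) Z.span_finite[OF fA] by auto
  then obtain a0 where a0: "a0 \<in> A" "\<alpha> a0 \<noteq> 0"
    using y(2) by (metis (no_types, lifting) sum.neutral Z.scale_zero_left)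
  obtain e where e: "e \<noteq> 0" "zmul e y \<in> Z.span B"
    using y(3) unfolding rspan_def by blast
  define T where "T = (A - {a0}) \<union> B"
  have "zmul e y = zmul (e * \<alpha> a0) a0 + (\<Sum>a\<in>A - {a0}. zmul (e * \<alpha> a) a)"
    unfolding \<alpha> Z.scale_sum_right using a0 fA by (simp add: sum.remove)
  then have "zmul (e * \<alpha> a0) a0 = zmul e y - (\<Sum>a\<in>A - {a0}. zmul (e * \<alpha> a) a)"
    by (simp add: eq_diff_eq)
  also have "\<dots> \<in> Z.span T"
  proof (rule Z.span_diff)
    show "zmul e y \<in> Z.span T"
      using e(2) Z.span_mono[of B T] unfolding T_def by blast
    show "(\<Sum>a\<in>A - {a0}. zmul (e * \<alpha> a) a) \<in> Z.span T"
      by (rule Z.span_sum, rule Z.span_scale, rule Z.span_base) (simp add: T_def)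
  qed
  finally have "a0 \<in> rspan T"
    unfolding rspan_def using e(1) a0(2) by (auto intro!: exI[of _ "e * \<alpha> a0"])
  then have "A \<union> B \<subseteq> rspan T"
    using rspan_base[of T] unfolding T_def by blast
  then show ?thesis
    using a0(1) unfolding T_def by blast
qed

lemma rk_lt_of_common:
  assumes fr: "finite_rank M" and tf: "torsion_free (gp M)"
    and sub: "N \<subseteq> M" "K \<subseteq> M"
    and cover: "gp M \<subseteq> {a + b | a b. a \<in> gp N \<and> b \<in> gp K}"
    and x: "x \<in> gp N" "x \<in> gp K" "x \<noteq> 0"
  shows "rk M < rk N + rk K"
proof -
  have frN: "finite_rank N" and frK: "finite_rank K"
    using finite_rank_subset[OF fr] sub by blast+
  obtain AN where AN: "AN \<subseteq> gp N" "zindep AN" "card AN = rk N"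
    using rk_ex[OF frN] by blast
  obtain AK where AK: "AK \<subseteq> gp K" "zindep AK" "card AK = rk K"
    using rk_ex[OF frK] by blast
  obtain AM where AM: "AM \<subseteq> gp M" "zindep AM" "card AM = rk M"
    using rk_ex[OF fr] by blast
  have fin: "finite AN" "finite AK"
    using AN AK zindep_def by blast+
  have RN: "gp N \<subseteq> rspan AN" and RK: "gp K \<subseteq> rspan AK"
    using max_indep_rspan frN AN frK AK by blast+
  obtain e where e: "e \<noteq> 0" "zmul e x \<in> Z.span AN"
    using RN x(1) unfolding rspan_def by blast
  have "zmul e x \<noteq> 0"
    using torsion_zmul[OF tf _ e(1)] x(1,3) gp_mono[OF sub(1)] by blast
  moreover have "zmul e x \<in> rspan AK"
    using RK x(2) Z.subspace_scale[OF subspace_rspan] by blast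
  ultimately obtain a0 where a0: "a0 \<in> AN" and U: "AN \<union> AK \<subseteq> rspan ((AN - {a0}) \<union> AK)"
    using exchange_common[OF fin(1) e(2)] by blast
  have "gp M \<subseteq> rspan (AN \<union> AK)"
    using cover RN RK rspan_mono[of AN "AN \<union> AK"] rspan_mono[of AK "AN \<union> AK"]
      Z.subspace_add[OF subspace_rspan] by blast
  then have "AM \<subseteq> rspan ((AN - {a0}) \<union> AK)"
    using AM(1) rspan_trans[OF U] by blast
  then have "card AM \<le> card ((AN - {a0}) \<union> AK)"
    using zindep_card_le[OF AM(2)] fin by simp
  also have "\<dots> \<le> card AN - 1 + card AK"
    using card_Un_le[of "AN - {a0}" AK] a0 fin by simp
  moreover have "card AN > 0"
    using a0 fin card_gt_0_iff by blast
  ultimately show ?thesis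
    using AM(3) AN(3) AK(3) by linarith
qed

section \<open>Minimal generating sets of sharp monoids consist of atoms\<close>

definition gens :: "'a::ab_group_add set \<Rightarrow> 'a set \<Rightarrow> bool" where
  "gens G M \<longleftrightarrow> finite G \<and> G \<subseteq> M \<and> M = {\<Sum>g\<in>G. nmul (c g) g | c. True}"

locale sharp_monoid =
  fixes M :: "'a::ab_group_add set"
  assumes submonoid: "submonoid M" and sharp: "sharp M"
begin

lemma add_eq_0: "x \<in> M \<Longrightarrow> y \<in> M \<Longrightarrow> x + y = 0 \<Longrightarrow> x = 0"
  using sharp unfolding sharp_def units_def by blast

lemma sum_eq_0: "finite A \<Longrightarrow> (\<And>i. i \<in> A \<Longrightarrow> f i \<in> M) \<Longrightarrow> sum f A = 0 \<Longrightarrow> \<forall>i\<in>A. f i = 0"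
proof (induct A rule: finite_induct)
  case (insert a A)
  have "sum f A \<in> M"
    using insert.prems by (intro submonoid_sum[OF submonoid]) auto
  moreover have "f a \<in> M" and e: "f a + sum f A = 0"
    using insert by simp_all
  ultimately have "f a = 0"
    using add_eq_0 by blast
  moreover have "\<forall>i\<in>A. f i = 0"
    using insert.hyps(3) insert.prems e \<open>f a = 0\<close> by simp
  ultimately show ?case
    by simp
qed simp

lemma combination_eq_0:
  assumes G: "finite G" "G \<subseteq> M" "0 \<notin> G" and z: "(\<Sum>h\<in>G. nmul (c h) h) = 0"
  shows "\<forall>h\<in>G. c h = 0"
proof
  fix h assume h: "h \<in> G"
  have terms: "\<forall>h\<in>G. nmul (c h) h = 0"
    using sum_eq_0[OF G(1) _ z] G(2) submonoid_nmul[OF submonoid] by blast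
  show "c h = 0"
  proof (cases "c h")
    case (Suc k)
    moreover have "nmul (c h) h = 0"
      using terms h by blast
    ultimately have "h + nmul k h = 0"
      by simp
    then show ?thesis
      using add_eq_0 h G submonoid_nmul[OF submonoid] by blast
  qed
qed

end

lemma gens_remove:
  assumes G: "gens G M" "g \<in> G" and g: "g = (\<Sum>h\<in>G - {g}. nmul (\<gamma> h) h)"
  shows "gens (G - {g}) M"
proof -
  have fG: "finite G"
    using G(1) gens_def by blast
  have "M = {\<Sum>h\<in>G - {g}. nmul (c h) h | c. True}"
  proof (intro set_eqI iffI)
    fix m assume "m \<in> M"
    then obtain c where "m = (\<Sum>h\<in>G. nmul (c h) h)"
      using G(1) unfolding gens_def by blast
    also have "\<dots> = nmul (c g) g + (\<Sum>h\<in>G - {g}. nmul (c h) h)"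
      using fG G(2) by (simp add: sum.remove)
    also have "nmul (c g) g = (\<Sum>h\<in>G - {g}. nmul (c g * \<gamma> h) h)"
      by (subst g) (simp add: nmul_sum nmul_mult)
    also have "(\<Sum>h\<in>G - {g}. nmul (c g * \<gamma> h) h) + (\<Sum>h\<in>G - {g}. nmul (c h) h)
        = (\<Sum>h\<in>G - {g}. nmul (c g * \<gamma> h + c h) h)"
      by (simp add: nmul_add sum.distrib)
    finally show "m \<in> {\<Sum>h\<in>G - {g}. nmul (c h) h | c. True}"
      by (intro CollectI exI[of _ "\<lambda>h. c g * \<gamma> h + c h"]) simp
  next
    fix m assume "m \<in> {\<Sum>h\<in>G - {g}. nmul (c h) h | c. True}"
    then obtain c where m: "m = (\<Sum>h\<in>G - {g}. nmul (c h) h)"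
      by blast
    have "(\<Sum>h\<in>G. nmul ((c(g := 0)) h) h) = (\<Sum>h\<in>G - {g}. nmul ((c(g := 0)) h) h)"
      using fG G(2) by (simp add: sum.remove)
    also have "\<dots> = m"
      unfolding m by (rule sum.cong) auto
    finally show "m \<in> M"
      using G(1) unfolding gens_def by blast
  qed
  then show ?thesis
    using G(1) unfolding gens_def by auto
qed

lemma min_gens:
  assumes "fin_gen M"
  shows "\<exists>G. gens G M \<and> 0 \<notin> G \<and> (\<forall>G'. gens G' M \<longrightarrow> card G \<le> card G')"
proof -
  have ex: "\<exists>G. gens G M"
    using assms unfolding fin_gen_def gens_def .
  define n where "n = (LEAST n. \<exists>G. gens G M \<and> card G = n)"
  obtain G where G: "gens G M" "card G = n"
    using LeastI_ex[of "\<lambda>n. \<exists>G. gens G M \<and> card G = n"] ex unfolding n_def by blast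
  have min: "card G \<le> card G'" if "gens G' M" for G'
  proof -
    have "n \<le> card G'"
      unfolding n_def by (rule Least_le) (use that in blast)
    then show ?thesis
      using G(2) by simp
  qed
  show ?thesis
  proof (cases "0 \<in> G")
    case True
    have "gens (G - {0}) M"
      using gens_remove[OF G(1) True, of "\<lambda>_. 0"] by simp
    then have "card G \<le> card (G - {0})"
      by (rule min)
    then show ?thesis
      using True G(1) card_Diff1_less[of G 0] unfolding gens_def by simp
  qed (use G(1) min in blast)
qed

text \<open>Writing a and b in the generators,
  their coefficients add up to a representation of g; minimality forces its
  g-coefficient to be positive, and sharpness forces everything else to
  vanish.\<close>

lemma (in sharp_monoid) min_gens_atom:
  assumes G: "gens G M" "0 \<notin> G" and min: "\<And>G'. gens G' M \<Longrightarrow> card G \<le> card G'"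
    and g: "g \<in> G" and ab: "a \<in> M" "b \<in> M" "g = a + b"
  shows "a = 0 \<or> b = 0"
proof -
  have fG: "finite G" and GM: "G \<subseteq> M"
    using G gens_def by blast+
  obtain \<alpha> where \<alpha>: "a = (\<Sum>h\<in>G. nmul (\<alpha> h) h)"
    using G ab(1) unfolding gens_def by blast
  obtain \<beta> where \<beta>: "b = (\<Sum>h\<in>G. nmul (\<beta> h) h)"
    using G ab(2) unfolding gens_def by blast
  define \<gamma> where "\<gamma> h = \<alpha> h + \<beta> h" for h
  define R where "R = (\<Sum>h\<in>G - {g}. nmul (\<gamma> h) h)"
  have "g = (\<Sum>h\<in>G. nmul (\<gamma> h) h)"
    unfolding ab(3) \<alpha> \<beta> \<gamma>_def by (simp add: nmul_add sum.distrib)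
  then have gR: "g = nmul (\<gamma> g) g + R"
    unfolding R_def using fG g by (simp add: sum.remove)
  obtain k where k: "\<gamma> g = Suc k"
  proof (cases "\<gamma> g")
    case 0
    then have "g = R"
      using gR by (simp only: nmul_0 add_0)
    then have "gens (G - {g}) M"
      using gens_remove[OF G(1) g, of \<gamma>] unfolding R_def by blast
    then have "card G \<le> card (G - {g})"
      by (rule min)
    then show ?thesis
      using card_Diff1_less[OF fG g] by simp
  qed
  have "(\<Sum>h\<in>G. nmul ((\<gamma>(g := k)) h) h) = nmul k g + R"
    unfolding R_def using fG g by (simp add: sum.remove)
  also have "\<dots> = 0"
    using gR k by (simp add: add.assoc)
  finally have all0: "\<forall>h\<in>G. (\<gamma>(g := k)) h = 0"
    using combination_eq_0[OF fG GM G(2)] by blast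
  then have "k = 0"
    using g by (metis fun_upd_same)
  then have one: "\<alpha> g + \<beta> g = 1"
    using k unfolding \<gamma>_def by simp
  have rest: "\<alpha> h = 0 \<and> \<beta> h = 0" if "h \<in> G" "h \<noteq> g" for h
  proof -
    have "(\<gamma>(g := k)) h = 0"
      using all0 that(1) by blast
    then show ?thesis
      using that(2) unfolding \<gamma>_def by simp
  qed
  show ?thesis
  proof (cases "\<alpha> g = 0")
    case True
    then have "\<forall>h\<in>G. \<alpha> h = 0"
      using rest by blast
    then show ?thesis
      unfolding \<alpha> by simp
  next
    case False
    then have "\<beta> g = 0"
      using one by simp
    then have "\<forall>h\<in>G. \<beta> h = 0"
      using rest by blast
    then show ?thesis
      unfolding \<beta> by simp
  qed
qed

section \<open>Faces, the ideal (N^+), and splittings\<close>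

text \<open>Faces of a sharp monoid are sharp, so N^+ is just N without 0.\<close>

lemma plus_part_eq:
  assumes "sharp M" "face N M"
  shows "plus_part N = N - {0}"
proof -
  have "0 \<in> units N"
    using assms(2) unfolding face_def submonoid_def units_def by auto
  moreover have "units N \<subseteq> units M"
    using assms(2) unfolding face_def units_def by blast
  ultimately show ?thesis
    using assms(1) unfolding sharp_def plus_part_def by blast
qed

lemma ideal_gen_ideal:
  assumes "submonoid M" "S \<subseteq> M"
  shows "ideal (gen_ideal S M) M"
  using assms unfolding ideal_def gen_ideal_def submonoid_def
  by (auto simp: add.assoc) blast+

lemma prime_complement_face:
  assumes "prime_ideal I M"
  shows "face (M - I) M"
proof -
  have "x \<notin> I" if "x \<in> M" "y \<in> M" "x + y \<notin> I" for x y
    using assms that unfolding prime_ideal_def ideal_def by blast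
  then show ?thesis
    using assms unfolding prime_ideal_def face_def by (auto simp: add.commute)
qed

lemma add_inj_iff: "inj_on (\<lambda>(n, k). n + k) (N \<times> K) \<longleftrightarrow> gp N \<inter> gp K \<subseteq> {0}"
proof
  assume inj: "inj_on (\<lambda>(n, k). n + k) (N \<times> K)"
  show "gp N \<inter> gp K \<subseteq> {0}"
  proof
    fix y assume "y \<in> gp N \<inter> gp K"
    then obtain a b c d where y: "y = a - b" "y = c - d" "a \<in> N" "b \<in> N" "c \<in> K" "d \<in> K"
      unfolding gp_def by blast
    then have "(\<lambda>(n, k). n + k) (a, d) = (\<lambda>(n, k). n + k) (b, c)"
      by (simp add: algebra_simps)
    then have "a = b"
      using inj_onD[OF inj] y by blast
    then show "y \<in> {0}"
      using y by simp
  qed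
next
  assume disj: "gp N \<inter> gp K \<subseteq> {0}"
  show "inj_on (\<lambda>(n, k). n + k) (N \<times> K)"
  proof (rule inj_onI, clarify)
    fix n k n' k' assume h: "n \<in> N" "k \<in> K" "n' \<in> N" "k' \<in> K" "n + k = n' + k'"
    then have "n - n' = k' - k"
      by (simp add: algebra_simps)
    moreover have "n - n' \<in> gp N" "k' - k \<in> gp K"
      unfolding gp_def using h by blast+
    ultimately have "n - n' = 0"
      using disj by auto
    then show "n = n' \<and> k = k'"
      using h(5) by simp
  qed
qed

lemma gp_cover:
  assumes "(\<lambda>(n, k). n + k) ` (N \<times> K) = M"
  shows "gp M \<subseteq> {a + b | a b. a \<in> gp N \<and> b \<in> gp K}"
proof
  fix y assume "y \<in> gp M"
  then obtain n1 k1 n2 k2 where y: "y = (n1 + k1) - (n2 + k2)"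
    and h: "n1 \<in> N" "k1 \<in> K" "n2 \<in> N" "k2 \<in> K"
    using assms unfolding gp_def by fastforce
  have "y = (n1 - n2) + (k1 - k2)"
    using y by (simp add: algebra_simps)
  moreover have "n1 - n2 \<in> gp N" "k1 - k2 \<in> gp K"
    unfolding gp_def using h by blast+
  ultimately show "y \<in> {a + b | a b. a \<in> gp N \<and> b \<in> gp K}"
    by blast
qed

lemma split_complement:
  assumes sh: "sharp M" and faN: "face N M" and faK: "face K M"
    and bij: "bij_betw (\<lambda>(n, k). n + k) (N \<times> K) M"
  shows "M - gen_ideal (plus_part N) M = K"
proof (intro set_eqI iffI)
  fix m assume m: "m \<in> M - gen_ideal (plus_part N) M"
  then have "m \<in> (\<lambda>(n, k). n + k) ` (N \<times> K)"
    using bij unfolding bij_betw_def by blast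
  then obtain n k where nk: "m = n + k" "n \<in> N" "k \<in> K"
    by auto
  have "k \<in> M"
    using faK nk(3) unfolding face_def by blast
  then have "n \<notin> plus_part N"
    using m nk(1) unfolding gen_ideal_def by blast
  then have "n = 0"
    using nk(2) plus_part_eq[OF sh faN] by blast
  then show "m \<in> K"
    using nk by simp
next
  fix k assume k: "k \<in> K"
  have disj: "gp N \<inter> gp K \<subseteq> {0}"
    using bij add_inj_iff unfolding bij_betw_def by blast
  have "s = 0" if "k = s + m" "s \<in> N" "m \<in> M" for s m
  proof -
    have "s \<in> M"
      using faN that(2) unfolding face_def by blast
    then have "s \<in> K"
      using faK that(1,3) k unfolding face_def by blast
    moreover have "0 \<in> N" "0 \<in> K"
      using faN faK unfolding face_def submonoid_def by blast+
    ultimately have "s \<in> gp N \<inter> gp K"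
      using that(2) unfolding gp_def by force
    then show "s = 0"
      using disj by blast
  qed
  moreover have "k \<in> M"
    using k faK unfolding face_def by blast
  ultimately show "k \<in> M - gen_ideal (plus_part N) M"
    unfolding gen_ideal_def plus_part_eq[OF sh faN] by blast
qed

lemma splits_off_imp:
  assumes tor: "toric M" and sh: "sharp M" and faN: "face N M" and spl: "splits_off N M"
  shows "prime_ideal (gen_ideal (plus_part N) M) M \<and>
         rk (M - gen_ideal (plus_part N) M) + rk N \<le> rk M"
proof -
  obtain K where faK: "face K M" and bij: "bij_betw (\<lambda>(n, k). n + k) (N \<times> K) M"
    using spl unfolding splits_off_def by blast
  have smM: "submonoid M" and frM: "finite_rank M"
    using tor fin_gen_finite_rank unfolding toric_def by blast+
  have smN: "submonoid N" "N \<subseteq> M" and smK: "submonoid K" "K \<subseteq> M"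
    using faN faK unfolding face_def by blast+
  have compl: "M - gen_ideal (plus_part N) M = K"
    using split_complement[OF sh faN faK bij] .
  have "plus_part N \<subseteq> M"
    using smN(2) unfolding plus_part_def by blast
  then have "prime_ideal (gen_ideal (plus_part N) M) M"
    unfolding prime_ideal_def compl using ideal_gen_ideal[OF smM] smK(1) by blast
  moreover have "gp N \<inter> gp K \<subseteq> {0}"
    using bij add_inj_iff unfolding bij_betw_def by blast
  then have "rk N + rk K \<le> rk M"
    using rk_add_le[OF frM smN(1) smK(1) smN(2) smK(2)] by blast
  ultimately show ?thesis
    unfolding compl by simp
qed

text \<open>Let K = M - (N^+) for a prime (N^+).  A minimal generator outside N
  lies in K: otherwise it would be s + m with 0 \<noteq> s \<in> N, forcing m = 0 since
  it is an atom, and so it would lie in N.\<close>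

lemma (in sharp_monoid) min_gens_outside_face:
  assumes G: "gens G M" "0 \<notin> G" "\<And>G'. gens G' M \<Longrightarrow> card G \<le> card G'"
    and faN: "face N M"
  shows "G - N \<subseteq> M - gen_ideal (plus_part N) M"
proof
  fix g assume g: "g \<in> G - N"
  have "False" if "g = s + m" "s \<in> N" "s \<noteq> 0" "m \<in> M" for s m
  proof -
    have "s \<in> M"
      using that(2) faN unfolding face_def by blast
    then have "m = 0"
      using min_gens_atom[OF G, of g s m] that g by blast
    then show False
      using that g by simp
  qed
  then show "g \<in> M - gen_ideal (plus_part N) M"
    using g G(1) unfolding gens_def gen_ideal_def plus_part_eq[OF sharp faN] by blast
qed

lemma gens_sum_image:
  assumes G: "gens G M" and smM: "submonoid M" and smN: "submonoid N" "N \<subseteq> M"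
    and smK: "submonoid K" "K \<subseteq> M" and GK: "G - N \<subseteq> K"
  shows "(\<lambda>(n, k). n + k) ` (N \<times> K) = M"
proof
  show "(\<lambda>(n, k). n + k) ` (N \<times> K) \<subseteq> M"
  proof clarify
    fix n k assume "n \<in> N" "k \<in> K"
    then show "n + k \<in> M"
      using smN(2) smK(2) smM unfolding submonoid_def by blast
  qed
next
  show "M \<subseteq> (\<lambda>(n, k). n + k) ` (N \<times> K)"
  proof
    fix m assume "m \<in> M"
    then obtain c where m: "m = (\<Sum>g\<in>G. nmul (c g) g)"
      using G unfolding gens_def by blast
    have "m = (\<Sum>g\<in>G \<inter> N. nmul (c g) g) + (\<Sum>g\<in>G - N. nmul (c g) g)"
      unfolding m using G unfolding gens_def by (simp add: sum.Int_Diff)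
    moreover have "(\<Sum>g\<in>G \<inter> N. nmul (c g) g) \<in> N"
      by (intro submonoid_sum[OF smN(1)] submonoid_nmul[OF smN(1)]) auto
    moreover have "(\<Sum>g\<in>G - N. nmul (c g) g) \<in> K"
      using GK by (intro submonoid_sum[OF smK(1)] submonoid_nmul[OF smK(1)]) auto
    ultimately show "m \<in> (\<lambda>(n, k). n + k) ` (N \<times> K)"
      by force
  qed
qed

text \<open>(c) implies (a): K = M - (N^+) is a face with N + K = M, and the rank
  inequality rules out a nonzero common element of gp N and gp K.\<close>

lemma imp_splits_off:
  assumes tor: "toric M" and sh: "sharp M" and faN: "face N M"
    and pr: "prime_ideal (gen_ideal (plus_part N) M) M"
    and rkc: "rk (M - gen_ideal (plus_part N) M) + rk N \<le> rk M"
  shows "splits_off N M"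
proof -
  define K where "K = M - gen_ideal (plus_part N) M"
  have smM: "submonoid M" and fg: "fin_gen M" and tf: "torsion_free (gp M)"
    using tor unfolding toric_def by blast+
  interpret sharp_monoid M
    using smM sh by unfold_locales
  have faK: "face K M"
    unfolding K_def using prime_complement_face[OF pr] .
  have smN: "submonoid N" "N \<subseteq> M" and smK: "submonoid K" "K \<subseteq> M"
    using faN faK unfolding face_def by blast+
  obtain G where G: "gens G M" "0 \<notin> G" "\<And>G'. gens G' M \<Longrightarrow> card G \<le> card G'"
    using min_gens[OF fg] by blast
  have "G - N \<subseteq> K"
    unfolding K_def using min_gens_outside_face[OF G faN] .
  then have img: "(\<lambda>(n, k). n + k) ` (N \<times> K) = M"
    using gens_sum_image[OF G(1) smM smN smK] by blast
  have "x = 0" if "x \<in> gp N" "x \<in> gp K" for x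
  proof (rule ccontr)
    assume "x \<noteq> 0"
    then have "rk M < rk N + rk K"
      using rk_lt_of_common[OF fin_gen_finite_rank[OF fg] tf smN(2) smK(2) gp_cover[OF img]] that
      by blast
    then show False
      using rkc unfolding K_def by simp
  qed
  then have "inj_on (\<lambda>(n, k). n + k) (N \<times> K)"
    unfolding add_inj_iff by blast
  then show ?thesis
    unfolding splits_off_def bij_betw_def using faK img by blast
qed

theorem lemma2p1:
  fixes M N :: "'a::ab_group_add set"
  assumes "toric M" and "sharp M" and "face N M"
  shows "(splits_off N M
          \<longleftrightarrow> (prime_ideal (gen_ideal (plus_part N) M) M \<and>
               height (gen_ideal (plus_part N) M) M \<ge> int (rk N)))
       \<and> (splits_off N M
          \<longleftrightarrow> (prime_ideal (gen_ideal (plus_part N) M) M \<and>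
               rk (M - gen_ideal (plus_part N) M) + rk N \<le> rk M))"
proof -
  have c: "splits_off N M \<longleftrightarrow> (prime_ideal (gen_ideal (plus_part N) M) M \<and>
      rk (M - gen_ideal (plus_part N) M) + rk N \<le> rk M)"
    using splits_off_imp[OF assms] imp_splits_off[OF assms] by blast
  have "height (gen_ideal (plus_part N) M) M \<ge> int (rk N) \<longleftrightarrow>
      rk (M - gen_ideal (plus_part N) M) + rk N \<le> rk M"
    unfolding height_def by linarith
  then show ?thesis
    using c by blast
qed

end
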